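(* Consider a one-site PTM cascade with $n=1$ layer and positive $\overline{F},\overline{S}$. Let $\xi=\gamma\overline{F}/\delta$, $p_1(y)=\lambda y(\xi-y)$, $p_2(y)=(\delta+\gamma)y^2-\gamma(1/\delta+\overline{F}+\xi+\overline{S})y+\gamma\xi\overline{S}$, and $g=p_1/p_2$. Then $p_2$ has two positive real roots $\alpha_1<\alpha_2$ with $\alpha_1<\xi<\alpha_2$; $g$ is continuous and increasing on each of the intervals $(-\infty,\alpha_1)$, $(\alpha_1,\alpha_2)$, $(\alpha_2,\infty)$; $g(0)=0$ and $g(y)\to+\infty$ as $y\to\alpha_1^-$. Moreover, for every positive $\overline{E}$, at the BMSS one has $E=g(Y^0)$ and $Y^0\in(0,\alpha_1)$.
   Context: For $n=1$ the one-site PTM cascade has species $E,S^0,S^1,F,Y^0,Y^1$ with reactions $E+S^0\rightleftharpoons Y^0\to E+S^1$ (rate constants $a^0,b^0,c^0$) and $F+S^1\rightleftharpoons Y^1\to F+S^0$ (rate constants $a^1,b^1,c^1$), all positive, mass-action kinetics. Put $\delta=a^1/(b^1+c^1)$, $\gamma=(c^1/c^0)\delta$, $\lambda=\frac{b^0+c^0}{a^0}\gamma$. A steady state for total amounts $\overline{E},\overline{F},\overline{S}$ is a real solution of $Y^0=\gamma FS^1$, $Y^1=\delta FS^1$, $\lambda FS^1=S^0E$, $\overline{F}=F+Y^1$, $\overline{E}=E+Y^0$, $\overline{S}=S^0+S^1+Y^0+Y^1$. A BMSS is a steady state with positive total amounts and all concentrations nonnegative. Increasing means strictly increasing. *)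

theory Defs
  imports Complex_Main
begin

text \<open>One-site PTM cascade (n = 1). Rate constants a0 b0 c0 (for E) and a1 b1 c1 (for F).\<close>

definition ptm_delta :: "real \<Rightarrow> real \<Rightarrow> real \<Rightarrow> real" where
  "ptm_delta a1 b1 c1 = a1 / (b1 + c1)"

definition ptm_gamma :: "real \<Rightarrow> real \<Rightarrow> real \<Rightarrow> real \<Rightarrow> real" where
  "ptm_gamma c0 a1 b1 c1 = (c1 / c0) * ptm_delta a1 b1 c1"

definition ptm_lambda :: "real \<Rightarrow> real \<Rightarrow> real \<Rightarrow> real \<Rightarrow> real \<Rightarrow> real \<Rightarrow> real" where
  "ptm_lambda a0 b0 c0 a1 b1 c1 = ((b0 + c0) / a0) * ptm_gamma c0 a1 b1 c1"

definition ptm_steady_state ::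
  "real \<Rightarrow> real \<Rightarrow> real \<Rightarrow> real \<Rightarrow> real \<Rightarrow> real \<Rightarrow> real \<Rightarrow> real \<Rightarrow> real \<Rightarrow>
   real \<Rightarrow> real \<Rightarrow> real \<Rightarrow> real \<Rightarrow> real \<Rightarrow> real \<Rightarrow> bool" where
  "ptm_steady_state a0 b0 c0 a1 b1 c1 Ebar Fbar Sbar E S0 S1 F Y0 Y1 \<longleftrightarrow>
     Y0 = ptm_gamma c0 a1 b1 c1 * F * S1 \<and>
     Y1 = ptm_delta a1 b1 c1 * F * S1 \<and>
     ptm_lambda a0 b0 c0 a1 b1 c1 * F * S1 = S0 * E \<and>
     Fbar = F + Y1 \<and>
     Ebar = E + Y0 \<and>
     Sbar = S0 + S1 + Y0 + Y1"

definition ptm_BMSS ::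
  "real \<Rightarrow> real \<Rightarrow> real \<Rightarrow> real \<Rightarrow> real \<Rightarrow> real \<Rightarrow> real \<Rightarrow> real \<Rightarrow> real \<Rightarrow>
   real \<Rightarrow> real \<Rightarrow> real \<Rightarrow> real \<Rightarrow> real \<Rightarrow> real \<Rightarrow> bool" where
  "ptm_BMSS a0 b0 c0 a1 b1 c1 Ebar Fbar Sbar E S0 S1 F Y0 Y1 \<longleftrightarrow>
     0 < Ebar \<and> 0 < Fbar \<and> 0 < Sbar \<and>
     0 \<le> E \<and> 0 \<le> S0 \<and> 0 \<le> S1 \<and> 0 \<le> F \<and> 0 \<le> Y0 \<and> 0 \<le> Y1 \<and>
     ptm_steady_state a0 b0 c0 a1 b1 c1 Ebar Fbar Sbar E S0 S1 F Y0 Y1"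

end

theory Submission
  imports Defs
begin

(* After the substitution xi = gamma Fbar / delta the shape of g = p1 / p2 is
   governed by three elementary facts about real quadratics and rational functions:
   (1) p2 has positive leading coefficient and p2 xi < 0, so p2 factors as
       (delta + gamma) (y - alpha1) (y - alpha2) with alpha1 < xi < alpha2, and
       alpha1 > 0 because p2 0 > 0;
   (2) the numerator of the derivative of p1 / p2 is lam times a quadratic with
       negative discriminant, so g' > 0 off the roots of p2, which makes g
       continuous and strictly increasing on each interval avoiding the roots;
   (3) p1 alpha1 > 0 and p2 -> 0+ from the left of alpha1, so g -> +infinity there.
   Finally, eliminating S1, F, Y1 from the steady-state equations gives
   E p2 Y0 = p1 Y0 with p2 Y0 > 0 and 0 < Y0 < xi, which pins Y0 into (0, alpha1). *)

lemma strict_mono_continuous_on_pos_deriv: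
  fixes f :: "real \<Rightarrow> real" and I :: "real set"
  assumes deriv: "\<And>z. z \<in> I \<Longrightarrow> \<exists>D. DERIV f z :> D \<and> 0 < D"
    and convex: "\<And>x y. x \<in> I \<Longrightarrow> y \<in> I \<Longrightarrow> {x..y} \<subseteq> I"
  shows "strict_mono_on I f" "continuous_on I f"
proof -
  show "strict_mono_on I f"
  proof (rule strict_mono_onI)
    fix r s assume "r \<in> I" "s \<in> I" "r < s"
    then show "f r < f s"
      using DERIV_pos_imp_increasing[OF \<open>r < s\<close>] deriv convex by (meson atLeastAtMost_iff subsetD)
  qed
  show "continuous_on I f"
    using deriv DERIV_isCont by (metis continuous_at_imp_continuous_on)
qed

lemma quadratic_factor_around_negative_point:
  fixes A B C x :: real
  assumes A_pos: "0 < A" and neg: "A * x^2 - B * x + C < 0"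
  obtains \<alpha>1 \<alpha>2 where "\<alpha>1 < x" "x < \<alpha>2" "\<And>y. A * y^2 - B * y + C = A * (y - \<alpha>1) * (y - \<alpha>2)"
proof -
  define Dsc where "Dsc = B^2 - 4 * A * C"
  have "4 * A * (A * x^2 - B * x + C) = (2 * A * x - B)^2 - Dsc"
    unfolding Dsc_def by (simp add: algebra_simps power2_eq_square)
  moreover have "4 * A * (A * x^2 - B * x + C) < 0"
    using A_pos neg by (simp add: mult_pos_neg)
  ultimately have "0 < Dsc" by (smt (verit) zero_le_power2)
  define s where "s = sqrt Dsc"
  have s_sq: "s^2 = Dsc" using \<open>0 < Dsc\<close> by (simp add: s_def)
  define \<alpha>1 where "\<alpha>1 = (B - s) / (2 * A)"
  define \<alpha>2 where "\<alpha>2 = (B + s) / (2 * A)"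
  have factor: "A * y^2 - B * y + C = A * (y - \<alpha>1) * (y - \<alpha>2)" for y
  proof -
    have "A * (y - \<alpha>1) * (y - \<alpha>2) = A * y^2 - B * y + (B^2 - s^2) / (4 * A)"
      using A_pos unfolding \<alpha>1_def \<alpha>2_def by (simp add: field_simps power2_eq_square)
    also have "(B^2 - s^2) / (4 * A) = C"
      using A_pos s_sq unfolding Dsc_def by (simp add: field_simps)
    finally show ?thesis by simp
  qed
  have "A * ((x - \<alpha>1) * (x - \<alpha>2)) < 0"
    using neg factor[of x] by (simp add: mult.assoc)
  then have "(x - \<alpha>1) * (x - \<alpha>2) < 0"
    using A_pos by (simp add: mult_less_0_iff)
  moreover have "\<alpha>1 < \<alpha>2"
    using A_pos \<open>0 < Dsc\<close> unfolding \<alpha>1_def \<alpha>2_def s_def by (simp add: divide_strict_right_mono)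
  ultimately have "\<alpha>1 < x" "x < \<alpha>2" by (auto simp: mult_less_0_iff)
  then show ?thesis using that factor by blast
qed

lemma quadratic_pos_of_neg_discriminant:
  fixes a b c y :: real
  assumes "0 < a" and "b^2 < a * c"
  shows "0 < a * y^2 - 2 * b * y + c"
proof -
  have "a * (a * y^2 - 2 * b * y + c) = (a * y - b)^2 + (a * c - b^2)"
    by (simp add: algebra_simps power2_eq_square)
  also have "\<dots> > 0" using assms(2) by (smt (verit) zero_le_power2)
  finally show ?thesis using \<open>0 < a\<close> by (simp add: zero_less_mult_iff)
qed

text \<open>The rational function  lam y (xi - y) / (A y^2 - B y + C)  has positive derivative
  at every point where the denominator does not vanish, provided the numerator
  of its derivative, lam ((B - xi A) y^2 - 2 C y + xi C), has negative discriminant.\<close>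
lemma rational_quadratic_pos_deriv:
  fixes lam xi A B C y :: real
  assumes "0 < lam" "0 < C" "0 < B - xi * A" "C < xi * (B - xi * A)"
    and nonzero: "A * y^2 - B * y + C \<noteq> 0"
  shows "\<exists>D. DERIV (\<lambda>y. lam * y * (xi - y) / (A * y^2 - B * y + C)) y :> D \<and> 0 < D"
proof -
  define q where "q = A * y^2 - B * y + C"
  define N where "N = lam * (xi - 2 * y) * q - lam * y * (xi - y) * (2 * A * y - B)"
  have deriv: "DERIV (\<lambda>y. lam * y * (xi - y) / (A * y^2 - B * y + C)) y :> N / (q * q)"
    unfolding N_def q_def using nonzero
    by (auto intro!: derivative_eq_intros simp: algebra_simps power2_eq_square)
  have "C^2 < (B - xi * A) * (xi * C)"
    using assms(2,4) by (simp add: power2_eq_square mult.commute)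
  then have "0 < (B - xi * A) * y^2 - 2 * C * y + xi * C"
    by (rule quadratic_pos_of_neg_discriminant[OF assms(3)])
  moreover have "N = lam * ((B - xi * A) * y^2 - 2 * C * y + xi * C)"
    unfolding N_def q_def by (simp add: algebra_simps power2_eq_square)
  ultimately have "0 < N" using \<open>0 < lam\<close> by simp
  moreover have "0 < q * q"
    using nonzero unfolding q_def[symmetric] by (metis not_real_square_gt_zero)
  ultimately show ?thesis using deriv by (meson divide_pos_pos)
qed

text \<open>The cascade with fixed positive rate constants and fixed totals Fb, Sb.
  Only the positivity of the derived constants delta, gamma, lambda matters below.\<close>
locale ptm_cascade =
  fixes a0 b0 c0 a1 b1 c1 Fb Sb :: real
  assumes rates_pos: "0 < a0" "0 < b0" "0 < c0" "0 < a1" "0 < b1" "0 < c1"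
    and totals_pos: "0 < Fb" "0 < Sb"
begin

definition \<delta> :: real where "\<delta> = ptm_delta a1 b1 c1"
definition \<gamma> :: real where "\<gamma> = ptm_gamma c0 a1 b1 c1"
definition lam :: real where "lam = ptm_lambda a0 b0 c0 a1 b1 c1"
definition \<xi> :: real where "\<xi> = \<gamma> * Fb / \<delta>"

definition p1 :: "real \<Rightarrow> real" where "p1 y = lam * y * (\<xi> - y)"
definition p2 :: "real \<Rightarrow> real" where
  "p2 y = (\<delta> + \<gamma>) * y^2 - \<gamma> * (1 / \<delta> + Fb + \<xi> + Sb) * y + \<gamma> * \<xi> * Sb"
definition g :: "real \<Rightarrow> real" where "g y = p1 y / p2 y"

lemma constants_pos: "0 < \<delta>" "0 < \<gamma>" "0 < lam" "0 < \<xi>"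
  using rates_pos totals_pos
  by (simp_all add: \<delta>_def \<gamma>_def lam_def \<xi>_def ptm_delta_def ptm_gamma_def ptm_lambda_def)

lemma \<xi>_mult_\<delta>: "\<xi> * \<delta> = \<gamma> * Fb"
  using constants_pos by (simp add: \<xi>_def)

text \<open>The value of p2 at xi is negative; this is what separates the two roots.\<close>
lemma p2_at_\<xi>: "p2 \<xi> = - \<gamma> * \<xi> / \<delta>"
  using constants_pos \<xi>_mult_\<delta> by (simp add: p2_def field_simps power2_eq_square)

lemma p2_factorization:
  obtains \<alpha>1 \<alpha>2 where "0 < \<alpha>1" "\<alpha>1 < \<xi>" "\<xi> < \<alpha>2"
    "\<And>y. p2 y = (\<delta> + \<gamma>) * (y - \<alpha>1) * (y - \<alpha>2)"
proof -
  have "p2 \<xi> < 0" using constants_pos by (simp add: p2_at_\<xi>)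
  then obtain \<alpha>1 \<alpha>2 where roots: "\<alpha>1 < \<xi>" "\<xi> < \<alpha>2"
    and factor: "\<And>y. p2 y = (\<delta> + \<gamma>) * (y - \<alpha>1) * (y - \<alpha>2)"
    using quadratic_factor_around_negative_point[of "\<delta> + \<gamma>"] constants_pos
    unfolding p2_def by (metis add_pos_pos)
  have "(\<delta> + \<gamma>) * (\<alpha>1 * \<alpha>2) = p2 0"
    using factor[of 0] by simp
  also have "p2 0 > 0" using constants_pos totals_pos by (simp add: p2_def)
  finally have "\<alpha>1 * \<alpha>2 > 0"
    using constants_pos by (simp add: zero_less_mult_iff)
  then have "0 < \<alpha>1"
    using roots constants_pos by (smt (verit) mult_nonpos_nonneg)
  then show ?thesis using that roots factor by blast
qed

text \<open>The key computation: g' > 0 away from the roots of p2.  In terms of the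
  general lemma, B - xi A = gamma (1/delta + Sb) and xi (B - xi A) - C = gamma xi / delta.\<close>
lemma g_pos_deriv:
  assumes "p2 y \<noteq> 0"
  shows "\<exists>D. DERIV g y :> D \<and> 0 < D"
proof -
  define B where "B = \<gamma> * (1 / \<delta> + Fb + \<xi> + Sb)"
  have B_minus: "B - \<xi> * (\<delta> + \<gamma>) = \<gamma> * (1 / \<delta> + Sb)"
    using \<xi>_mult_\<delta> unfolding B_def by (simp add: algebra_simps)
  have "0 < B - \<xi> * (\<delta> + \<gamma>)"
    using constants_pos totals_pos by (simp add: B_minus add_pos_pos)
  moreover have "\<gamma> * \<xi> * Sb < \<xi> * (B - \<xi> * (\<delta> + \<gamma>))"
  proof -
    have "\<xi> * (B - \<xi> * (\<delta> + \<gamma>)) = \<gamma> * \<xi> * Sb + \<gamma> * \<xi> / \<delta>"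
      unfolding B_minus by (simp add: algebra_simps)
    then show ?thesis using constants_pos by simp
  qed
  moreover have "\<gamma> * \<xi> * Sb > 0" using constants_pos totals_pos by simp
  moreover have "(\<delta> + \<gamma>) * y^2 - B * y + \<gamma> * \<xi> * Sb \<noteq> 0"
    using assms by (simp add: p2_def B_def)
  moreover have "g = (\<lambda>y. lam * y * (\<xi> - y) / ((\<delta> + \<gamma>) * y^2 - B * y + \<gamma> * \<xi> * Sb))"
    by (simp add: fun_eq_iff g_def p1_def p2_def B_def)
  ultimately show ?thesis
    using rational_quadratic_pos_deriv[of lam] constants_pos by simp
qed

lemma g_increasing_on:
  assumes "\<And>x y. x \<in> I \<Longrightarrow> y \<in> I \<Longrightarrow> {x..y} \<subseteq> I" and "\<And>y. y \<in> I \<Longrightarrow> p2 y \<noteq> 0"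
  shows "strict_mono_on I g \<and> continuous_on I g"
  using strict_mono_continuous_on_pos_deriv[of I g] g_pos_deriv assms by blast

text \<open>At a root r in (0, xi) approached from a side where p2 > 0, g blows up,
  because p1 r > 0.\<close>
lemma g_tendsto_at_top_at_left_root:
  assumes "0 < r" "r < \<xi>" "p2 r = 0" and pos: "\<forall>\<^sub>F y in at_left r. 0 < p2 y"
  shows "filterlim g at_top (at_left r)"
proof -
  have "(p1 \<longlongrightarrow> p1 r) (at_left r)" "(p2 \<longlongrightarrow> p2 r) (at_left r)"
    unfolding p1_def[abs_def] p2_def[abs_def] by (intro tendsto_intros)+
  moreover have "0 < p1 r" using assms constants_pos by (simp add: p1_def)
  ultimately show ?thesis
    unfolding g_def[abs_def] using LIM_at_top_divide pos \<open>p2 r = 0\<close> by metis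
qed

lemma BMSS_equations:
  assumes "ptm_BMSS a0 b0 c0 a1 b1 c1 Ebar Fb Sb E S0 S1 F Y0 Y1"
  shows "0 < Ebar" "0 \<le> E" "0 \<le> S0" "0 \<le> S1" "0 \<le> F" "0 \<le> Y0" "0 \<le> Y1"
    "Y0 = \<gamma> * F * S1" "Y1 = \<delta> * F * S1" "lam * F * S1 = S0 * E"
    "Fb = F + Y1" "Ebar = E + Y0" "Sb = S0 + S1 + Y0 + Y1"
  using assms by (simp_all add: ptm_BMSS_def ptm_steady_state_def \<delta>_def \<gamma>_def lam_def)

text \<open>At a BMSS all concentrations are positive: if Y0 = 0 then F S1 = 0, hence
  S0 = 0 (as E = Ebar > 0) and Y1 = 0, so F = Fb > 0 and S1 = Sb > 0, a contradiction.\<close>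
lemma BMSS_positive:
  assumes "ptm_BMSS a0 b0 c0 a1 b1 c1 Ebar Fb Sb E S0 S1 F Y0 Y1"
  shows "0 < Y0" "0 < F" "0 < S1" "0 < S0" "0 < E"
proof -
  note eq = BMSS_equations[OF assms]
  show "0 < Y0"
  proof (rule ccontr)
    assume "\<not> 0 < Y0"
    then have Y0: "Y0 = 0" using eq(6) by linarith
    then have FS1: "F * S1 = 0" using eq(8) constants_pos by (simp add: mult.assoc)
    then have Y1: "Y1 = 0" using eq(9) by (simp add: mult.assoc)
    have "0 < E" using eq(1,12) Y0 by simp
    moreover have "S0 * E = 0" using eq(10) FS1 by (simp add: mult.assoc)
    ultimately have "S0 = 0" by simp
    then have "F = Fb" "S1 = Sb" using eq(11,13) Y0 Y1 by simp_all
    then show False using FS1 totals_pos by simp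
  qed
  then show "0 < F" "0 < S1"
    using eq by (auto simp: less_le)
  then have "0 < S0 * E" using eq constants_pos by (metis mult_pos_pos)
  then show "0 < S0" "0 < E" using eq by (auto simp: zero_less_mult_iff)
qed

lemma BMSS_F:
  assumes "ptm_BMSS a0 b0 c0 a1 b1 c1 Ebar Fb Sb E S0 S1 F Y0 Y1"
  shows "\<gamma> / \<delta> * F = \<xi> - Y0"
proof -
  note eq = BMSS_equations[OF assms]
  have "\<gamma> * F = \<gamma> * Fb - \<delta> * Y0"
    unfolding eq(11,8,9) by (simp add: algebra_simps)
  also have "\<dots> = \<delta> * (\<xi> - Y0)" using \<xi>_mult_\<delta> by (simp add: algebra_simps)
  finally show ?thesis using constants_pos by (simp add: field_simps)
qed

text \<open>Eliminating S1, Y1 and F through the S-conservation law: at a BMSS,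
  p2 Y0 is a positive multiple of F S0.\<close>
lemma BMSS_p2:
  assumes "ptm_BMSS a0 b0 c0 a1 b1 c1 Ebar Fb Sb E S0 S1 F Y0 Y1"
  shows "p2 Y0 = \<gamma>^2 / \<delta> * F * S0"
proof -
  note eq = BMSS_equations[OF assms]
  have S0: "\<gamma> * F * S0 = \<gamma> * F * Sb - Y0 - (\<gamma> + \<delta>) * F * Y0"
    using eq by (simp add: algebra_simps)
  have "\<gamma>^2 / \<delta> * F * S0 = \<gamma> / \<delta> * (\<gamma> * F * Sb - Y0 - (\<gamma> + \<delta>) * F * Y0)"
    unfolding S0[symmetric] by (simp add: power2_eq_square)
  also have "\<dots> = (\<gamma> / \<delta> * F) * (\<gamma> * Sb) - \<gamma> * Y0 / \<delta> - (\<gamma> + \<delta>) * (\<gamma> / \<delta> * F) * Y0"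
    using constants_pos by (simp add: field_simps)
  also have "\<dots> = (\<delta> + \<gamma>) * Y0^2 - \<gamma> * Y0 / \<delta> - (\<gamma> * Fb) * Y0 - \<gamma> * (\<xi> + Sb) * Y0 + \<gamma> * \<xi> * Sb"
    unfolding BMSS_F[OF assms] \<xi>_mult_\<delta>[symmetric] by (simp add: algebra_simps power2_eq_square)
  also have "\<dots> = p2 Y0" by (simp add: p2_def algebra_simps)
  finally show ?thesis by simp
qed

text \<open>Every BMSS lies on the graph of g, with 0 < Y0 < xi and p2 Y0 > 0: multiplying
  the previous identity by E and using lam F S1 = S0 E gives E p2 Y0 = p1 Y0.\<close>
lemma BMSS_on_graph_of_g:
  assumes "ptm_BMSS a0 b0 c0 a1 b1 c1 Ebar Fb Sb E S0 S1 F Y0 Y1"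
  shows "E = g Y0" "0 < Y0" "Y0 < \<xi>" "0 < p2 Y0"
proof -
  note eq = BMSS_equations[OF assms] and pos = BMSS_positive[OF assms]
  show p2_pos: "0 < p2 Y0"
    using pos constants_pos by (simp add: BMSS_p2[OF assms])
  have "E * p2 Y0 = \<gamma>^2 / \<delta> * F * (S0 * E)"
    by (simp add: BMSS_p2[OF assms])
  also have "S0 * E = lam * (F * S1)" using eq(10) by (simp add: mult.assoc)
  also have "F * S1 = Y0 / \<gamma>" using eq(8) constants_pos by simp
  also have "\<gamma>^2 / \<delta> * F * (lam * (Y0 / \<gamma>)) = lam * Y0 * (\<gamma> / \<delta> * F)"
    using constants_pos by (simp add: field_simps power2_eq_square)
  also have "\<dots> = p1 Y0" unfolding BMSS_F[OF assms] by (simp add: p1_def)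
  finally show "E = g Y0" using p2_pos by (simp add: g_def eq_divide_eq)
  show "0 < Y0" by (rule pos)
  have "0 < \<gamma> / \<delta> * F" using pos constants_pos by simp
  then show "Y0 < \<xi>" using BMSS_F[OF assms] by linarith
qed

context
  fixes \<alpha>1 \<alpha>2 :: real
  assumes roots: "0 < \<alpha>1" "\<alpha>1 < \<xi>" "\<xi> < \<alpha>2"
    and p2_factor: "\<And>y. p2 y = (\<delta> + \<gamma>) * (y - \<alpha>1) * (y - \<alpha>2)"
begin

lemma p2_zeros: "{y. p2 y = 0} = {\<alpha>1, \<alpha>2}"
  using constants_pos by (auto simp: p2_factor)

lemma p2_pos_iff: "0 < p2 y \<longleftrightarrow> y < \<alpha>1 \<or> \<alpha>2 < y"
proof -
  have "0 < p2 y \<longleftrightarrow> 0 < (y - \<alpha>1) * (y - \<alpha>2)"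
    using constants_pos by (simp add: p2_factor mult.assoc zero_less_mult_iff add_pos_pos)
  also have "\<dots> \<longleftrightarrow> y < \<alpha>1 \<or> \<alpha>2 < y"
    using roots by (auto simp: zero_less_mult_iff)
  finally show ?thesis .
qed

lemma g_increasing_between_roots:
  "strict_mono_on {..<\<alpha>1} g \<and> continuous_on {..<\<alpha>1} g"
  "strict_mono_on {\<alpha>1<..<\<alpha>2} g \<and> continuous_on {\<alpha>1<..<\<alpha>2} g"
  "strict_mono_on {\<alpha>2<..} g \<and> continuous_on {\<alpha>2<..} g"
  using roots constants_pos by (auto intro!: g_increasing_on simp: p2_factor)

text \<open>Left of alpha1 we have p2 > 0, so g tends to +infinity at alpha1 from the left.\<close>
lemma g_tendsto_at_top_at_left_\<alpha>1: "filterlim g at_top (at_left \<alpha>1)"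
proof (rule g_tendsto_at_top_at_left_root)
  show "\<forall>\<^sub>F y in at_left \<alpha>1. 0 < p2 y"
    using eventually_at_left_real[OF roots(1)] by eventually_elim (simp add: p2_pos_iff)
qed (use roots p2_zeros in auto)

text \<open>Every BMSS has its Y0 in (0, alpha1): p2 Y0 > 0 and Y0 < xi < alpha2.\<close>
lemma BMSS_below_first_root:
  assumes "ptm_BMSS a0 b0 c0 a1 b1 c1 Ebar Fb Sb E S0 S1 F Y0 Y1"
  shows "E = g Y0 \<and> 0 < Y0 \<and> Y0 < \<alpha>1"
  using BMSS_on_graph_of_g[OF assms] roots p2_pos_iff by auto

end

end

theorem mainTheorem4:
  fixes a0 b0 c0 a1 b1 c1 Fbar Sbar :: real
  assumes "0 < a0" "0 < b0" "0 < c0" "0 < a1" "0 < b1" "0 < c1"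
    and "0 < Fbar" "0 < Sbar"
  defines "\<delta> \<equiv> ptm_delta a1 b1 c1"
    and "\<gamma> \<equiv> ptm_gamma c0 a1 b1 c1"
    and "lam \<equiv> ptm_lambda a0 b0 c0 a1 b1 c1"
  defines "\<xi> \<equiv> \<gamma> * Fbar / \<delta>"
  defines "p1 \<equiv> (\<lambda>y::real. lam * y * (\<xi> - y))"
    and "p2 \<equiv> (\<lambda>y::real. (\<delta> + \<gamma>) * y^2 - \<gamma> * (1 / \<delta> + Fbar + \<xi> + Sbar) * y + \<gamma> * \<xi> * Sbar)"
  defines "g \<equiv> (\<lambda>y::real. p1 y / p2 y)"
  shows "\<exists>\<alpha>1 \<alpha>2. 0 < \<alpha>1 \<and> \<alpha>1 < \<xi> \<and> \<xi> < \<alpha>2 \<and>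
           {y. p2 y = 0} = {\<alpha>1, \<alpha>2} \<and>
           continuous_on {..<\<alpha>1} g \<and> strict_mono_on {..<\<alpha>1} g \<and>
           continuous_on {\<alpha>1<..<\<alpha>2} g \<and> strict_mono_on {\<alpha>1<..<\<alpha>2} g \<and>
           continuous_on {\<alpha>2<..} g \<and> strict_mono_on {\<alpha>2<..} g \<and>
           g 0 = 0 \<and>
           filterlim g at_top (at_left \<alpha>1) \<and>
           (\<forall>Ebar E S0 S1 F Y0 Y1. 0 < Ebar \<longrightarrow>
              ptm_BMSS a0 b0 c0 a1 b1 c1 Ebar Fbar Sbar E S0 S1 F Y0 Y1 \<longrightarrow>
              E = g Y0 \<and> 0 < Y0 \<and> Y0 < \<alpha>1)"
proof -
  interpret C: ptm_cascade a0 b0 c0 a1 b1 c1 Fbar Sbar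
    using assms(1-8) by unfold_locales
  have reduced_form: "\<xi> = C.\<xi>" "p2 = C.p2" "g = C.g"
    by (simp_all add: fun_eq_iff \<xi>_def p1_def p2_def g_def C.\<xi>_def C.p1_def C.p2_def C.g_def
        \<gamma>_def C.\<gamma>_def \<delta>_def C.\<delta>_def lam_def C.lam_def)
  obtain \<alpha>1 \<alpha>2 where roots: "0 < \<alpha>1" "\<alpha>1 < C.\<xi>" "C.\<xi> < \<alpha>2"
    and factor: "\<And>y. C.p2 y = (C.\<delta> + C.\<gamma>) * (y - \<alpha>1) * (y - \<alpha>2)"
    using C.p2_factorization by blast
  have "g 0 = 0" by (simp add: g_def p1_def)
  then show ?thesis
    unfolding reduced_form
    using roots C.p2_zeros[OF roots factor] C.g_increasing_between_roots[OF roots factor]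
      C.g_tendsto_at_top_at_left_\<alpha>1[OF roots factor] C.BMSS_below_first_root[OF roots factor]
    by blast
qed

end
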